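(* Let $p\in\mathbb{R}\langle x_1,\dots,x_m\rangle$ be a multilinear polynomial evaluated on the real quaternion algebra $\mathbb{H}$. Then $\operatorname{Im} p$ is one of $\{0\}$, $\mathbb{R}$ (the scalar quaternions), $V$ (the pure quaternions), or $\mathbb{H}$.
   Context: $\mathbb{H}=\langle 1,i,j,k\rangle_{\mathbb{R}}$ with $i^2=j^2=k^2=-1$, $ij=-ji=k$, $jk=-kj=i$, $ki=-ik=j$. Scalars are $\mathbb{R}1$ and $V=\mathbb{R}i+\mathbb{R}j+\mathbb{R}k$ is the space of pure quaternions. A polynomial is multilinear if it has the form $\sum_{\sigma\in S_m}c_\sigma x_{\sigma(1)}\cdots x_{\sigma(m)}$ with real $c_\sigma$; $\operatorname{Im} p=\{p(a_1,\dots,a_m):a_i\in\mathbb{H}\}$. *)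

theory Defs
  imports "HOL-Combinatorics.Permutations" Complex_Main
begin

datatype quat = Quat (Re: real) (Im1: real) (Im2: real) (Im3: real)

lemma quat_eq_iff: "x = y \<longleftrightarrow> Re x = Re y \<and> Im1 x = Im1 y \<and> Im2 x = Im2 y \<and> Im3 x = Im3 y"
  by (cases x; cases y) auto

instantiation quat :: ring_1
begin
definition "0 = Quat 0 0 0 0"
definition "1 = Quat 1 0 0 0"
definition "x + y = Quat (Re x + Re y) (Im1 x + Im1 y) (Im2 x + Im2 y) (Im3 x + Im3 y)"
definition "x - y = Quat (Re x - Re y) (Im1 x - Im1 y) (Im2 x - Im2 y) (Im3 x - Im3 y)"
definition "- x = Quat (- Re x) (- Im1 x) (- Im2 x) (- Im3 x)"
definition "x * y = Quat
   (Re x * Re y - Im1 x * Im1 y - Im2 x * Im2 y - Im3 x * Im3 y)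
   (Re x * Im1 y + Im1 x * Re y + Im2 x * Im3 y - Im3 x * Im2 y)
   (Re x * Im2 y - Im1 x * Im3 y + Im2 x * Re y + Im3 x * Im1 y)
   (Re x * Im3 y + Im1 x * Im2 y - Im2 x * Im1 y + Im3 x * Re y)"
instance
  by standard (auto simp: quat_eq_iff zero_quat_def one_quat_def plus_quat_def minus_quat_def
                 uminus_quat_def times_quat_def algebra_simps)
end

instantiation quat :: real_algebra_1
begin
definition "scaleR r x = Quat (r * Re x) (r * Im1 x) (r * Im2 x) (r * Im3 x)"
instance
  by standard (auto simp: quat_eq_iff zero_quat_def one_quat_def plus_quat_def minus_quat_def
                 uminus_quat_def times_quat_def scaleR_quat_def algebra_simps)
end

definition qi :: quat where "qi = Quat 0 1 0 0"
definition qj :: quat where "qj = Quat 0 0 1 0"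
definition qk :: quat where "qk = Quat 0 0 0 1"

lemma quat_units: "qi * qi = -1" "qj * qj = -1" "qk * qk = -1"
  "qi * qj = qk" "qj * qi = - qk" "qj * qk = qi" "qk * qj = - qi" "qk * qi = qj" "qi * qk = - qj"
  by (simp_all add: qi_def qj_def qk_def times_quat_def one_quat_def uminus_quat_def)

definition scalar_quats :: "quat set" where "scalar_quats = range of_real"
definition pure_quats :: "quat set" where "pure_quats = {q. Re q = 0}"

text \<open>A multilinear polynomial in \<open>x_1,\<dots>,x_m\<close> (indexed here as \<open>x_0,\<dots>,x_{m-1}\<close>) is
 \<open>\<Sum>\<^sub>\<sigma> c_\<sigma> x_{\<sigma>(1)}\<cdots>x_{\<sigma>(m)}\<close>, given by its real coefficient function \<open>c\<close> on permutations.\<close>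
definition mpoly_eval :: "nat \<Rightarrow> ((nat \<Rightarrow> nat) \<Rightarrow> real) \<Rightarrow> (nat \<Rightarrow> 'a::real_algebra_1) \<Rightarrow> 'a" where
  "mpoly_eval m c a = (\<Sum>\<sigma> | \<sigma> permutes {..<m}. c \<sigma> *\<^sub>R prod_list (map (\<lambda>i. a (\<sigma> i)) [0..<m]))"

definition mpoly_image :: "nat \<Rightarrow> ((nat \<Rightarrow> nat) \<Rightarrow> real) \<Rightarrow> 'a::real_algebra_1 set" where
  "mpoly_image m c = range (mpoly_eval m c)"

end

theory Submission
  imports Defs "HOL-Computational_Algebra.Polynomial"
begin

text \<open>A multilinear polynomial is linear in each variable and commutes with conjugation by
units, so its image is a cone invariant under the rotations of \<open>V\<close>. If the image lies in \<open>V\<close>,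
it is therefore \<open>{0}\<close> or \<open>V\<close>. Otherwise, expanding every variable in the basis \<open>1, i, j, k\<close>
gives an evaluation on basis elements with nonzero real part; such an evaluation is a real
multiple of a single unit (all monomials agree up to sign), hence a nonzero scalar. If changing
one variable of some nonzero scalar value can leave \<open>\<real>\<close>, linearity in that variable produces
all of \<open>\<real> + \<real>w\<close> for a nonzero \<open>w \<in> V\<close>, and rotating \<open>w\<close> gives \<open>\<bbbH>\<close>. If it never can, a
polynomial-interpolation argument moving the variables one at a time shows that every value is
scalar, so the image is \<open>\<real>\<close>.\<close>

section \<open>Quaternion arithmetic\<close>

lemma quat_component_simps [simp]:
  "Re 0 = 0" "Im1 0 = 0" "Im2 0 = 0" "Im3 0 = 0"
  "Re 1 = 1" "Im1 1 = 0" "Im2 1 = 0" "Im3 1 = 0"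
  "Re (x + y) = Re x + Re y" "Im1 (x + y) = Im1 x + Im1 y"
  "Im2 (x + y) = Im2 x + Im2 y" "Im3 (x + y) = Im3 x + Im3 y"
  "Re (x - y) = Re x - Re y" "Im1 (x - y) = Im1 x - Im1 y"
  "Im2 (x - y) = Im2 x - Im2 y" "Im3 (x - y) = Im3 x - Im3 y"
  "Re (- x) = - Re x" "Im1 (- x) = - Im1 x" "Im2 (- x) = - Im2 x" "Im3 (- x) = - Im3 x"
  "Re (s *\<^sub>R x) = s * Re x" "Im1 (s *\<^sub>R x) = s * Im1 x"
  "Im2 (s *\<^sub>R x) = s * Im2 x" "Im3 (s *\<^sub>R x) = s * Im3 x"
  "Re (of_real s) = s" "Im1 (of_real s :: quat) = 0"
  "Im2 (of_real s :: quat) = 0" "Im3 (of_real s :: quat) = 0"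
  "Re qi = 0" "Im1 qi = 1" "Im2 qi = 0" "Im3 qi = 0"
  "Re qj = 0" "Im1 qj = 0" "Im2 qj = 1" "Im3 qj = 0"
  "Re qk = 0" "Im1 qk = 0" "Im2 qk = 0" "Im3 qk = 1"
  by (simp_all add: zero_quat_def one_quat_def plus_quat_def minus_quat_def uminus_quat_def
      scaleR_quat_def of_real_def qi_def qj_def qk_def)

lemma quat_mult_components:
  "Re (x * y) = Re x * Re y - Im1 x * Im1 y - Im2 x * Im2 y - Im3 x * Im3 y"
  "Im1 (x * y) = Re x * Im1 y + Im1 x * Re y + Im2 x * Im3 y - Im3 x * Im2 y"
  "Im2 (x * y) = Re x * Im2 y - Im1 x * Im3 y + Im2 x * Re y + Im3 x * Im1 y"
  "Im3 (x * y) = Re x * Im3 y + Im1 x * Im2 y - Im2 x * Im1 y + Im3 x * Re y"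
  by (simp_all add: times_quat_def)

lemma quat_basis_expansion: "x = Re x *\<^sub>R 1 + Im1 x *\<^sub>R qi + Im2 x *\<^sub>R qj + Im3 x *\<^sub>R qk"
  by (simp add: quat_eq_iff)

lemma linear_quat_basis_expansion:
  fixes f :: "quat \<Rightarrow> 'a::real_vector"
  assumes "linear f"
  shows "f x = Re x *\<^sub>R f 1 + Im1 x *\<^sub>R f qi + Im2 x *\<^sub>R f qj + Im3 x *\<^sub>R f qk"
  by (subst quat_basis_expansion) (simp add: linear_add[OF assms] linear_scale[OF assms])

lemma linear_quat_components: "linear Re" "linear Im1" "linear Im2" "linear Im3"
  by (auto intro: linearI)

lemma of_real_quat_commute: "(of_real s :: quat) * x = x * of_real s"
  by (simp add: quat_eq_iff quat_mult_components)

lemma scalar_quats_iff: "q \<in> scalar_quats \<longleftrightarrow> Im1 q = 0 \<and> Im2 q = 0 \<and> Im3 q = 0"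
  by (auto simp: scalar_quats_def quat_eq_iff intro: rangeI[where x = "Re q"])

lemma scalar_quats_eq_of_real_Re: "q \<in> scalar_quats \<Longrightarrow> q = of_real (Re q)"
  by (simp add: scalar_quats_iff quat_eq_iff)

lemma quat_invertible:
  fixes x :: quat
  assumes "x \<noteq> 0"
  obtains y where "x * y = 1" "y * x = 1"
proof -
  define n where "n = (Re x)\<^sup>2 + (Im1 x)\<^sup>2 + (Im2 x)\<^sup>2 + (Im3 x)\<^sup>2"
  have "n \<noteq> 0"
    using assms by (auto simp: n_def quat_eq_iff add_nonneg_eq_0_iff)
  define x' where "x' = Quat (Re x) (- Im1 x) (- Im2 x) (- Im3 x)"
  have "x * x' = of_real n" "x' * x = of_real n"
    by (simp_all add: quat_eq_iff quat_mult_components x'_def n_def power2_eq_square)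
  then have "x * ((1 / n) *\<^sub>R x') = 1" "((1 / n) *\<^sub>R x') * x = 1"
    using \<open>n \<noteq> 0\<close> by (simp_all add: of_real_def)
  then show ?thesis by (rule that)
qed

lemma pure_quat_square:
  "Re w = 0 \<Longrightarrow> w * w = - of_real ((Im1 w)\<^sup>2 + (Im2 w)\<^sup>2 + (Im3 w)\<^sup>2)"
  by (simp add: quat_eq_iff quat_mult_components power2_eq_square)

lemma pure_quat_conjugate_same_norm:
  fixes v w :: quat
  assumes pure: "Re v = 0" "Re w = 0" and "v \<noteq> - w"
    and norm: "(Im1 v)\<^sup>2 + (Im2 v)\<^sup>2 + (Im3 v)\<^sup>2 = (Im1 w)\<^sup>2 + (Im2 w)\<^sup>2 + (Im3 w)\<^sup>2"
  obtains u u' where "u * u' = 1" "u' * u = 1" "u * w * u' = v"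
proof -
  define N where "N = (Im1 v)\<^sup>2 + (Im2 v)\<^sup>2 + (Im3 v)\<^sup>2"
  have vv: "v * v = - of_real N" and ww: "w * w = - of_real N"
    using pure_quat_square[OF pure(1)] pure_quat_square[OF pure(2)] norm by (simp_all add: N_def)
  \<comment> \<open>\<open>u = |v|\<^sup>2 - v w\<close> intertwines \<open>w\<close> and \<open>v\<close>; its real part is \<open>|v + w|\<^sup>2 / 2\<close>.\<close>
  define u where "u = of_real N - v * w"
  have "u * w = v * u"
  proof -
    have "u * w = of_real N * w - v * (w * w)" by (simp add: u_def algebra_simps mult.assoc)
    also have "\<dots> = of_real N * w + of_real N * v" by (simp add: ww of_real_quat_commute)
    also have "\<dots> = v * of_real N - (v * v) * w" by (simp add: vv of_real_quat_commute)
    also have "\<dots> = v * u" by (simp add: u_def algebra_simps mult.assoc)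
    finally show ?thesis .
  qed
  have "2 * Re u = (Im1 v + Im1 w)\<^sup>2 + (Im2 v + Im2 w)\<^sup>2 + (Im3 v + Im3 w)\<^sup>2"
    using pure norm by (simp add: u_def N_def quat_mult_components power2_eq_square algebra_simps)
  moreover have "\<not> (Im1 v + Im1 w = 0 \<and> Im2 v + Im2 w = 0 \<and> Im3 v + Im3 w = 0)"
    using \<open>v \<noteq> - w\<close> pure by (auto simp: quat_eq_iff add_eq_0_iff)
  ultimately have "u \<noteq> 0"
    by (auto simp: add_nonneg_eq_0_iff)
  then obtain u' where u': "u * u' = 1" "u' * u = 1" by (rule quat_invertible)
  have "u * w * u' = v * (u * u')" by (simp add: \<open>u * w = v * u\<close> mult.assoc)
  with u' show ?thesis using that by simp
qed

lemma pure_quat_conjugate_scaleR: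
  fixes v w :: quat
  assumes "Re w = 0" "w \<noteq> 0" "Re v = 0"
  obtains \<gamma> u u' where "u * u' = 1" "u' * u = 1" "u * (\<gamma> *\<^sub>R w) * u' = v"
proof -
  define Nv where "Nv = (Im1 v)\<^sup>2 + (Im2 v)\<^sup>2 + (Im3 v)\<^sup>2"
  define Nw where "Nw = (Im1 w)\<^sup>2 + (Im2 w)\<^sup>2 + (Im3 w)\<^sup>2"
  have "Nw > 0"
    using assms(1,2) by (auto simp: Nw_def quat_eq_iff add_nonneg_eq_0_iff
        intro!: add_nonneg_nonneg order.not_eq_order_implies_strict)
  define \<gamma> where "\<gamma> = sqrt (Nv / Nw)"
  have norm: "(Im1 v)\<^sup>2 + (Im2 v)\<^sup>2 + (Im3 v)\<^sup>2
      = (Im1 (\<gamma> *\<^sub>R w))\<^sup>2 + (Im2 (\<gamma> *\<^sub>R w))\<^sup>2 + (Im3 (\<gamma> *\<^sub>R w))\<^sup>2"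
  proof -
    have "\<gamma>\<^sup>2 * Nw = Nv" using \<open>Nw > 0\<close> by (simp add: \<gamma>_def Nv_def)
    then show ?thesis by (simp add: Nw_def Nv_def power_mult_distrib algebra_simps)
  qed
  show ?thesis
  proof (cases "v = - (\<gamma> *\<^sub>R w)")
    case True
    then show ?thesis using that[of 1 1 "- \<gamma>"] by simp
  next
    case False
    then show ?thesis
      using pure_quat_conjugate_same_norm[OF assms(3) _ False norm] assms(1) that by auto
  qed
qed

section \<open>Multilinearity and conjugation invariance\<close>

lemma permutes_lessThan_map_upt:
  assumes "\<sigma> permutes {..<m}"
  shows "distinct (map \<sigma> [0..<m])" "set (map \<sigma> [0..<m]) = {..<m}"
proof -
  have "inj_on \<sigma> {..<m}" using assms permutes_inj_on by blast
  then show "distinct (map \<sigma> [0..<m])" by (simp add: distinct_map atLeast0LessThan)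
  show "set (map \<sigma> [0..<m]) = {..<m}" using permutes_image[OF assms] by (simp add: atLeast0LessThan)
qed

lemma mpoly_eval_cong:
  assumes "\<And>r. r < m \<Longrightarrow> a r = a' r"
  shows "mpoly_eval m c a = mpoly_eval m c a'"
  unfolding mpoly_eval_def
proof (rule sum.cong)
  fix \<sigma> assume "\<sigma> \<in> {\<sigma>. \<sigma> permutes {..<m}}"
  then have "\<And>i. i < m \<Longrightarrow> a (\<sigma> i) = a' (\<sigma> i)"
    using assms permutes_in_image by fastforce
  then have "map (\<lambda>i. a (\<sigma> i)) [0..<m] = map (\<lambda>i. a' (\<sigma> i)) [0..<m]"
    by (intro map_cong) auto
  then show "c \<sigma> *\<^sub>R prod_list (map (\<lambda>i. a (\<sigma> i)) [0..<m])
      = c \<sigma> *\<^sub>R prod_list (map (\<lambda>i. a' (\<sigma> i)) [0..<m])"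
    by (simp only:)
qed simp

lemma linear_prod_list_fun_upd:
  fixes a :: "nat \<Rightarrow> 'a::real_algebra_1"
  assumes "distinct ys" "r \<in> set ys"
  shows "linear (\<lambda>x. prod_list (map (a(r := x)) ys))"
  using assms
proof (induction ys)
  case Nil
  then show ?case by simp
next
  case (Cons h ys)
  show ?case
  proof (cases "h = r")
    case True
    with Cons.prems have "map (a(r := x)) ys = map a ys" for x by (auto intro: map_cong)
    with True have eq: "(\<lambda>x. prod_list (map (a(r := x)) (h # ys))) = (\<lambda>x. x * prod_list (map a ys))"
      by (simp only: list.map prod_list.Cons fun_upd_same)
    show ?thesis unfolding eq by (auto intro!: linearI simp: distrib_right)
  next
    case False
    have "linear (\<lambda>x. prod_list (map (a(r := x)) ys))"
      using Cons.prems False by (intro Cons.IH) auto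
    moreover have "linear (\<lambda>y. a h * y)"
      by (auto intro: linearI simp: distrib_left)
    ultimately have "linear ((\<lambda>y. a h * y) \<circ> (\<lambda>x. prod_list (map (a(r := x)) ys)))"
      by (rule linear_compose)
    with False show ?thesis by (simp add: comp_def fun_upd_other del: fun_upd_apply)
  qed
qed

lemma linear_mpoly_eval_fun_upd:
  assumes "r < m"
  shows "linear (\<lambda>x. mpoly_eval m c (a(r := x)))"
  unfolding mpoly_eval_def
proof (intro linear_compose_sum ballI linear_compose_scale_right)
  fix \<sigma> assume "\<sigma> \<in> {\<sigma>. \<sigma> permutes {..<m}}"
  then have "distinct (map \<sigma> [0..<m])" "r \<in> set (map \<sigma> [0..<m])"
    using permutes_lessThan_map_upt assms by auto
  from linear_prod_list_fun_upd[OF this, of a]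
  show "linear (\<lambda>x. prod_list (map (\<lambda>i. (a(r := x)) (\<sigma> i)) [0..<m]))"
    by (simp add: comp_def)
qed

lemma mpoly_eval_scaleR_fun_upd:
  assumes "r < m"
  shows "mpoly_eval m c (a(r := s *\<^sub>R x)) = s *\<^sub>R mpoly_eval m c (a(r := x))"
  using linear_scale[OF linear_mpoly_eval_fun_upd[OF assms]] .

lemma mpoly_image_scaleR:
  assumes "1 \<le> m" "y \<in> mpoly_image m c"
  shows "s *\<^sub>R y \<in> mpoly_image m c"
proof -
  obtain a where "y = mpoly_eval m c a" using assms(2) by (auto simp: mpoly_image_def)
  then have "s *\<^sub>R y = mpoly_eval m c (a(0 := s *\<^sub>R a 0))"
    using mpoly_eval_scaleR_fun_upd[of 0 m c a s "a 0"] assms(1) by simp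
  then show ?thesis by (simp add: mpoly_image_def)
qed

lemma prod_list_map_conjugate:
  fixes u u' :: "'a::monoid_mult"
  assumes "u' * u = 1" "u * u' = 1"
  shows "prod_list (map (\<lambda>i. u * a i * u') ys) = u * prod_list (map a ys) * u'"
proof (induction ys)
  case Nil
  then show ?case using assms by simp
next
  case (Cons h ys)
  have "u * a h * u' * (u * prod_list (map a ys) * u') = u * a h * (u' * u) * prod_list (map a ys) * u'"
    by (simp add: mult.assoc)
  then show ?case using Cons assms by (simp add: mult.assoc)
qed

lemma mpoly_eval_conjugate:
  fixes u u' :: "'a::real_algebra_1"
  assumes "u' * u = 1" "u * u' = 1"
  shows "mpoly_eval m c (\<lambda>i. u * a i * u') = u * mpoly_eval m c a * u'"
  by (simp add: mpoly_eval_def prod_list_map_conjugate[OF assms, of "\<lambda>i. a (_ i)"]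
      sum_distrib_left sum_distrib_right)

lemma mpoly_image_conjugate:
  assumes "u' * u = 1" "u * u' = 1" "y \<in> mpoly_image m c"
  shows "u * y * u' \<in> mpoly_image m c"
proof -
  obtain a where "y = mpoly_eval m c a" using assms(3) by (auto simp: mpoly_image_def)
  then have "u * y * u' = mpoly_eval m c (\<lambda>i. u * a i * u')"
    by (simp add: mpoly_eval_conjugate[OF assms(1,2)])
  then show ?thesis by (simp add: mpoly_image_def)
qed

section \<open>Evaluations on the basis \<open>1, i, j, k\<close>\<close>

lemma mpoly_eval_basis_witness:
  fixes a :: "nat \<Rightarrow> quat" and \<phi> :: "quat \<Rightarrow> real"
  assumes "linear \<phi>" "\<phi> (mpoly_eval m c a) \<noteq> 0"
  obtains e where "\<forall>r<m. e r \<in> {1, qi, qj, qk}" "\<phi> (mpoly_eval m c e) \<noteq> 0"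
proof -
  have "\<exists>e. (\<forall>r<k. e r \<in> {1, qi, qj, qk}) \<and> \<phi> (mpoly_eval m c e) \<noteq> 0" if "k \<le> m" for k
    using that
  proof (induction k)
    case 0
    then show ?case using assms(2) by blast
  next
    case (Suc k)
    then obtain e where e: "\<forall>r<k. e r \<in> {1, qi, qj, qk}" "\<phi> (mpoly_eval m c e) \<noteq> 0" by auto
    have "linear (\<phi> \<circ> (\<lambda>x. mpoly_eval m c (e(k := x))))"
      using linear_compose[OF linear_mpoly_eval_fun_upd assms(1)] Suc.prems by simp
    from linear_quat_basis_expansion[OF this, of "e k"]
    have expansion: "\<phi> (mpoly_eval m c e) = Re (e k) * \<phi> (mpoly_eval m c (e(k := 1)))
        + Im1 (e k) * \<phi> (mpoly_eval m c (e(k := qi))) + Im2 (e k) * \<phi> (mpoly_eval m c (e(k := qj)))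
        + Im3 (e k) * \<phi> (mpoly_eval m c (e(k := qk)))"
      by simp
    have "\<exists>x\<in>{1, qi, qj, qk}. \<phi> (mpoly_eval m c (e(k := x))) \<noteq> 0"
    proof (rule ccontr)
      assume "\<not> ?thesis"
      then have "\<phi> (mpoly_eval m c e) = 0" unfolding expansion by simp
      with e(2) show False ..
    qed
    then obtain x where x: "x \<in> {1, qi, qj, qk}" "\<phi> (mpoly_eval m c (e(k := x))) \<noteq> 0" ..
    have "\<forall>r<Suc k. (e(k := x)) r \<in> {1, qi, qj, qk}"
      using e(1) x(1) by (auto simp: less_Suc_eq)
    with x(2) show ?case by blast
  qed
  then show ?thesis using that by blast
qed

text \<open>\<open>quat_unit p q\<close> is \<open>i\<^sup>p j\<^sup>q\<close> up to sign.\<close>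

definition quat_unit :: "nat \<Rightarrow> nat \<Rightarrow> quat" where
  "quat_unit p q = (if even p then if even q then 1 else qj else if even q then qi else qk)"

lemma quat_unit_mult:
  "quat_unit p q * quat_unit p' q' \<in> {quat_unit (p + p') (q + q'), - quat_unit (p + p') (q + q')}"
  by (cases "even p"; cases "even q"; cases "even p'"; cases "even q'")
    (simp_all add: quat_unit_def quat_units)

lemma prod_list_quat_unit:
  "prod_list (map (\<lambda>r. quat_unit (f r) (g r)) ys)
     \<in> {quat_unit (sum_list (map f ys)) (sum_list (map g ys)),
        - quat_unit (sum_list (map f ys)) (sum_list (map g ys))}"
proof (induction ys)
  case Nil
  then show ?case by (simp add: quat_unit_def)
next
  case (Cons y ys)
  then show ?case
    using quat_unit_mult[of "f y" "g y" "sum_list (map f ys)" "sum_list (map g ys)"] by auto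
qed

lemma mpoly_eval_basis:
  assumes "\<forall>r<m. e r \<in> {1, qi, qj, qk}"
  obtains s p q where "mpoly_eval m c e = s *\<^sub>R quat_unit p q"
proof -
  define f where "f r = (if e r = qi \<or> e r = qk then 1 else 0 :: nat)" for r
  define g where "g r = (if e r = qj \<or> e r = qk then 1 else 0 :: nat)" for r
  have "qi \<noteq> 1" "qj \<noteq> 1" "qk \<noteq> 1" "qi \<noteq> qj" "qi \<noteq> qk" "qj \<noteq> qk"
    by (simp_all add: quat_eq_iff)
  then have e_unit: "e r = quat_unit (f r) (g r)" if "r < m" for r
    using assms that by (auto simp: f_def g_def quat_unit_def)
  \<comment> \<open>Every monomial is \<open>\<pm>\<close> the same unit: \<open>p\<close> and \<open>q\<close> count the slots holding \<open>i\<close> or \<open>k\<close>,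
      resp. \<open>j\<close> or \<open>k\<close>, whatever their order.\<close>
  define G where "G = quat_unit (sum f {..<m}) (sum g {..<m})"
  have "prod_list (map (\<lambda>i. e (\<sigma> i)) [0..<m]) \<in> {G, - G}" if \<sigma>: "\<sigma> permutes {..<m}" for \<sigma>
  proof -
    have "map (\<lambda>i. e (\<sigma> i)) [0..<m] = map (\<lambda>r. quat_unit (f r) (g r)) (map \<sigma> [0..<m])"
      using e_unit permutes_in_image[OF \<sigma>] by simp
    moreover have "sum_list (map f (map \<sigma> [0..<m])) = sum f {..<m}"
      "sum_list (map g (map \<sigma> [0..<m])) = sum g {..<m}"
      using permutes_lessThan_map_upt[OF \<sigma>] by (metis sum_list_distinct_conv_sum_set)+
    ultimately show ?thesis
      using prod_list_quat_unit[of f g "map \<sigma> [0..<m]"] unfolding G_def by metis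
  qed
  moreover define sgn where
    "sgn \<sigma> = (if prod_list (map (\<lambda>i. e (\<sigma> i)) [0..<m]) = G then 1 else - 1 :: real)" for \<sigma>
  ultimately have "prod_list (map (\<lambda>i. e (\<sigma> i)) [0..<m]) = sgn \<sigma> *\<^sub>R G"
    if "\<sigma> permutes {..<m}" for \<sigma>
    using that by fastforce
  then have "mpoly_eval m c e = (\<Sum>\<sigma> | \<sigma> permutes {..<m}. (c \<sigma> * sgn \<sigma>) *\<^sub>R G)"
    unfolding mpoly_eval_def by (intro sum.cong) auto
  then show ?thesis
    using that[of "\<Sum>\<sigma> | \<sigma> permutes {..<m}. c \<sigma> * sgn \<sigma>"] unfolding G_def
    by (simp add: scaleR_sum_left)
qed

lemma mpoly_eval_nonzero_scalar:
  fixes a :: "nat \<Rightarrow> quat"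
  assumes "Re (mpoly_eval m c a) \<noteq> 0"
  obtains b where "mpoly_eval m c b \<in> scalar_quats" "mpoly_eval m c b \<noteq> 0"
proof -
  obtain e where e: "\<forall>r<m. e r \<in> {1, qi, qj, qk}" "Re (mpoly_eval m c e) \<noteq> 0"
    using mpoly_eval_basis_witness[OF linear_quat_components(1) assms] by blast
  obtain s p q where eq: "mpoly_eval m c e = s *\<^sub>R quat_unit p q"
    using mpoly_eval_basis[OF e(1)] by blast
  with e(2) have "quat_unit p q = 1"
    by (auto simp: quat_unit_def split: if_splits)
  with eq e(2) show ?thesis
    using that[of e] by (auto simp: scalar_quats_iff)
qed

section \<open>Interpolation along lines\<close>

definition partial_line :: "nat \<Rightarrow> (nat \<Rightarrow> 'a::real_vector) \<Rightarrow> (nat \<Rightarrow> 'a) \<Rightarrow> real \<Rightarrow> nat \<Rightarrow> 'a" where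
  "partial_line k b d t = (\<lambda>r. if r < k then b r + t *\<^sub>R d r else b r)"

lemma mpoly_eval_line_poly:
  fixes \<phi> :: "'a::real_algebra_1 \<Rightarrow> real"
  assumes "linear \<phi>" "k \<le> m"
  shows "\<exists>p. \<forall>t. \<phi> (mpoly_eval m c (partial_line k b d t)) = poly p t"
  unfolding partial_line_def using assms(2)
proof (induction k arbitrary: b)
  case 0
  show ?case by (intro exI[of _ "[:\<phi> (mpoly_eval m c b):]"]) simp
next
  case (Suc k)
  then have "k < m" by simp
  obtain p1 where p1: "\<forall>t. \<phi> (mpoly_eval m c (\<lambda>r. if r < k then b r + t *\<^sub>R d r else b r)) = poly p1 t"
    using Suc.IH \<open>k < m\<close> by fastforce
  obtain p2 where p2: "\<forall>t. \<phi> (mpoly_eval m c (\<lambda>r. if r < k then (b(k := d k)) r + t *\<^sub>R d r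
      else (b(k := d k)) r)) = poly p2 t"
    using Suc.IH[of "b(k := d k)"] \<open>k < m\<close> by fastforce
  have "\<phi> (mpoly_eval m c (\<lambda>r. if r < Suc k then b r + t *\<^sub>R d r else b r)) = poly (p1 + [:0, 1:] * p2) t"
    for t
  proof -
    let ?B = "\<lambda>r. if r < k then b r + t *\<^sub>R d r else b r"
    let ?B' = "\<lambda>r. if r < k then (b(k := d k)) r + t *\<^sub>R d r else (b(k := d k)) r"
    have L: "linear (\<lambda>x. mpoly_eval m c (?B(k := x)))"
      by (rule linear_mpoly_eval_fun_upd[OF \<open>k < m\<close>])
    have "(\<lambda>r. if r < Suc k then b r + t *\<^sub>R d r else b r) = ?B(k := b k + t *\<^sub>R d k)"
      by (auto simp: less_Suc_eq)
    then have "\<phi> (mpoly_eval m c (\<lambda>r. if r < Suc k then b r + t *\<^sub>R d r else b r))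
        = \<phi> (mpoly_eval m c (?B(k := b k)) + t *\<^sub>R mpoly_eval m c (?B(k := d k)))"
      by (simp only: linear_add[OF L] linear_scale[OF L])
    also have "\<dots> = \<phi> (mpoly_eval m c ?B) + t * \<phi> (mpoly_eval m c ?B')"
    proof -
      have "?B(k := b k) = ?B" "?B(k := d k) = ?B'" by auto
      then show ?thesis by (simp add: linear_add[OF assms(1)] linear_scale[OF assms(1)])
    qed
    also have "\<dots> = poly (p1 + [:0, 1:] * p2) t"
      using p1 p2 by simp
    finally show ?thesis .
  qed
  then show ?case by blast
qed

lemma poly_eq_0_if_vanishes_off_roots:
  fixes f g :: "'a::{idom, ring_char_0} poly"
  assumes "f \<noteq> 0" "\<And>t. poly f t \<noteq> 0 \<Longrightarrow> poly g t = 0"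
  shows "g = 0"
proof -
  have "infinite (UNIV - {t. poly f t = 0})"
    using poly_roots_finite[OF assms(1)] by (simp add: Diff_infinite_finite infinite_UNIV_char_0)
  moreover have "UNIV - {t. poly f t = 0} \<subseteq> {t. poly g t = 0}" using assms(2) by auto
  ultimately have "infinite {t. poly g t = 0}" using finite_subset by blast
  then show "g = 0" using poly_roots_finite by blast
qed

text \<open>Off the finitely many roots of the real part along the line, \<open>stable\<close> applies to slot \<open>k\<close>;
  the imaginary parts one slot further are then polynomials with infinitely many roots.\<close>

lemma mpoly_eval_partial_line_scalar_Suc:
  fixes b d :: "nat \<Rightarrow> quat"
  assumes stable: "\<And>a r x. r < m \<Longrightarrow> mpoly_eval m c a \<in> scalar_quats \<Longrightarrow> mpoly_eval m c a \<noteq> 0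
      \<Longrightarrow> mpoly_eval m c (a(r := x)) \<in> scalar_quats"
    and "k < m"
    and scalar: "\<And>t. mpoly_eval m c (partial_line k b d t) \<in> scalar_quats"
    and "mpoly_eval m c b \<noteq> 0"
  shows "mpoly_eval m c (partial_line (Suc k) b d t) \<in> scalar_quats"
proof -
  obtain f where f: "\<forall>s. Re (mpoly_eval m c (partial_line k b d s)) = poly f s"
    using mpoly_eval_line_poly[OF linear_quat_components(1)] \<open>k < m\<close> by (meson less_imp_le)
  have "partial_line k b d 0 = b" by (auto simp: partial_line_def)
  then have "f \<noteq> 0"
    using f scalar[of 0] \<open>mpoly_eval m c b \<noteq> 0\<close> by (metis poly_0 scalar_quats_eq_of_real_Re of_real_0)
  have next_scalar: "mpoly_eval m c (partial_line (Suc k) b d s) \<in> scalar_quats"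
    if "poly f s \<noteq> 0" for s
  proof -
    have "mpoly_eval m c (partial_line k b d s) \<noteq> 0" using that f by (metis quat_component_simps(1))
    moreover have "partial_line (Suc k) b d s = (partial_line k b d s)(k := b k + s *\<^sub>R d k)"
      by (auto simp: partial_line_def less_Suc_eq)
    ultimately show ?thesis using stable \<open>k < m\<close> scalar by simp
  qed
  have "\<phi> (mpoly_eval m c (partial_line (Suc k) b d t)) = 0"
    if lin: "linear \<phi>" and vanish: "\<forall>q\<in>scalar_quats. \<phi> q = 0" for \<phi> :: "quat \<Rightarrow> real"
  proof -
    obtain g where g: "\<forall>s. \<phi> (mpoly_eval m c (partial_line (Suc k) b d s)) = poly g s"
      using mpoly_eval_line_poly[OF lin] \<open>k < m\<close> by (meson Suc_leI)
    have "g = 0"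
    proof (rule poly_eq_0_if_vanishes_off_roots[OF \<open>f \<noteq> 0\<close>])
      show "poly g s = 0" if "poly f s \<noteq> 0" for s
        using g next_scalar[OF that] vanish by metis
    qed
    then show ?thesis using g by simp
  qed
  then show ?thesis using linear_quat_components by (simp add: scalar_quats_iff)
qed

lemma mpoly_eval_scalar_if_stable:
  fixes a b :: "nat \<Rightarrow> quat"
  assumes stable: "\<And>a r x. r < m \<Longrightarrow> mpoly_eval m c a \<in> scalar_quats \<Longrightarrow> mpoly_eval m c a \<noteq> 0
      \<Longrightarrow> mpoly_eval m c (a(r := x)) \<in> scalar_quats"
    and b: "mpoly_eval m c b \<in> scalar_quats" "mpoly_eval m c b \<noteq> 0"
  shows "mpoly_eval m c a \<in> scalar_quats"
proof -
  have "mpoly_eval m c (partial_line k b d t) \<in> scalar_quats" if "k \<le> m" for k d t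
    using that
  proof (induction k arbitrary: t)
    case 0
    then show ?case using b(1) by (simp add: partial_line_def)
  next
    case (Suc k)
    then show ?case using mpoly_eval_partial_line_scalar_Suc[OF stable _ _ b(2)] by simp
  qed
  moreover have "mpoly_eval m c (partial_line m b (\<lambda>r. a r - b r) 1) = mpoly_eval m c a"
    by (rule mpoly_eval_cong) (simp add: partial_line_def)
  ultimately show ?thesis by (metis order_refl)
qed

lemma mpoly_image_pure_quats_cases:
  assumes "1 \<le> m" "mpoly_image m c \<subseteq> pure_quats"
  shows "mpoly_image m c = {0 :: quat} \<or> mpoly_image m c = pure_quats"
proof (cases "mpoly_image m c = {0 :: quat}")
  case False
  moreover have "mpoly_image m c \<noteq> ({} :: quat set)" by (simp add: mpoly_image_def)
  ultimately obtain w :: quat where w: "w \<in> mpoly_image m c" "w \<noteq> 0" by blast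
  with assms(2) have "Re w = 0" unfolding pure_quats_def by blast
  have "pure_quats \<subseteq> mpoly_image m c"
  proof
    fix v assume "v \<in> pure_quats"
    then have "Re v = 0" by (simp add: pure_quats_def)
    then obtain \<gamma> u u' where u: "u * u' = 1" "u' * u = 1" "u * (\<gamma> *\<^sub>R w) * u' = v"
      using pure_quat_conjugate_scaleR[OF \<open>Re w = 0\<close> w(2)] by blast
    show "v \<in> mpoly_image m c"
      using mpoly_image_conjugate[OF u(2,1) mpoly_image_scaleR[OF assms(1) w(1), of \<gamma>]]
      by (simp only: u(3))
  qed
  with assms(2) show ?thesis by (simp add: subset_antisym)
qed simp

lemma mpoly_image_eq_scalar_quats:
  fixes y :: quat
  assumes "1 \<le> m" "mpoly_image m c \<subseteq> scalar_quats" "y \<in> mpoly_image m c" "y \<noteq> 0"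
  shows "mpoly_image m c = scalar_quats"
proof
  have y: "y = of_real (Re y)" using assms(2,3) scalar_quats_eq_of_real_Re by blast
  with assms(4) have "Re y \<noteq> 0" by (metis of_real_0)
  show "scalar_quats \<subseteq> mpoly_image m c"
  proof
    fix z assume "z \<in> scalar_quats"
    then obtain t where "z = of_real t" by (auto simp: scalar_quats_def)
    with y \<open>Re y \<noteq> 0\<close> have "z = (t / Re y) *\<^sub>R y" by (simp add: quat_eq_iff)
    then show "z \<in> mpoly_image m c" using mpoly_image_scaleR[OF assms(1,3)] by simp
  qed
qed (use assms(2) in simp)

lemma mpoly_image_eq_UNIV:
  fixes a :: "nat \<Rightarrow> quat"
  assumes "r < m" "mpoly_eval m c a \<in> scalar_quats" "mpoly_eval m c a \<noteq> 0"
    and "mpoly_eval m c (a(r := x)) \<notin> scalar_quats"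
  shows "mpoly_image m c = (UNIV :: quat set)"
proof -
  define \<mu> where "\<mu> = Re (mpoly_eval m c a)"
  have \<mu>: "mpoly_eval m c a = of_real \<mu>"
    using assms(2) scalar_quats_eq_of_real_Re by (simp add: \<mu>_def)
  with assms(3) have "\<mu> \<noteq> 0" by auto
  define q where "q = mpoly_eval m c (a(r := x))"
  define w where "w = q - of_real (Re q)"
  have "Re w = 0" "w \<noteq> 0"
    using assms(4) by (auto simp: w_def q_def scalar_quats_iff quat_eq_iff)
  \<comment> \<open>Slot \<open>r\<close> ranging over the span of \<open>a r\<close> and \<open>x\<close> yields every \<open>s + \<gamma> w\<close>; conjugation then
      turns \<open>\<gamma> w\<close> into any pure quaternion while fixing the scalar \<open>s\<close>.\<close>
  have line: "of_real s + \<gamma> *\<^sub>R w \<in> mpoly_image m c" for s \<gamma>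
  proof -
    define \<alpha> where "\<alpha> = (s - \<gamma> * Re q) / \<mu>"
    have L: "linear (\<lambda>y. mpoly_eval m c (a(r := y)))"
      by (rule linear_mpoly_eval_fun_upd[OF assms(1)])
    have "mpoly_eval m c (a(r := \<alpha> *\<^sub>R a r + \<gamma> *\<^sub>R x)) = \<alpha> *\<^sub>R mpoly_eval m c a + \<gamma> *\<^sub>R q"
      by (simp add: linear_add[OF L] linear_scale[OF L] q_def)
    also have "\<dots> = of_real s + \<gamma> *\<^sub>R w"
      using \<mu> \<open>\<mu> \<noteq> 0\<close> by (simp add: \<alpha>_def w_def quat_eq_iff algebra_simps diff_divide_distrib)
    finally show ?thesis by (metis mpoly_image_def rangeI)
  qed
  have "z \<in> mpoly_image m c" for z :: quat
  proof -
    have "Re (z - of_real (Re z)) = 0" by simp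
    then obtain \<gamma> u u' where u: "u * u' = 1" "u' * u = 1" "u * (\<gamma> *\<^sub>R w) * u' = z - of_real (Re z)"
      using pure_quat_conjugate_scaleR[OF \<open>Re w = 0\<close> \<open>w \<noteq> 0\<close>] by blast
    have "u * of_real (Re z) * u' = of_real (Re z) * (u * u')"
      by (simp add: of_real_quat_commute mult.assoc)
    with u(1) have "u * of_real (Re z) * u' = of_real (Re z)" by simp
    then have z: "u * (of_real (Re z) + \<gamma> *\<^sub>R w) * u' = z"
      using u(3) by (simp only: distrib_left distrib_right) simp
    show ?thesis using mpoly_image_conjugate[OF u(2,1) line[of "Re z" \<gamma>]] by (simp only: z)
  qed
  then show ?thesis by blast
qed

theorem theorem1p16:
  fixes m :: nat and c :: "(nat \<Rightarrow> nat) \<Rightarrow> real"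
  assumes "m \<ge> 1"
  shows "(mpoly_image m c :: quat set) = {0} \<or> (mpoly_image m c :: quat set) = scalar_quats
       \<or> (mpoly_image m c :: quat set) = pure_quats \<or> (mpoly_image m c :: quat set) = UNIV"
proof (cases "(mpoly_image m c :: quat set) \<subseteq> pure_quats")
  case True
  then show ?thesis using mpoly_image_pure_quats_cases[OF assms] by blast
next
  case False
  then obtain a :: "nat \<Rightarrow> quat" where "Re (mpoly_eval m c a) \<noteq> 0"
    by (auto simp: mpoly_image_def pure_quats_def)
  then obtain b where b: "mpoly_eval m c b \<in> scalar_quats" "mpoly_eval m c b \<noteq> 0"
    by (rule mpoly_eval_nonzero_scalar)
  show ?thesis
  proof (cases "(mpoly_image m c :: quat set) \<subseteq> scalar_quats")
    case True
    then show ?thesis using mpoly_image_eq_scalar_quats[OF assms True _ b(2)] b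
      by (auto simp: mpoly_image_def)
  next
    case False
    then obtain a' :: "nat \<Rightarrow> quat" where "mpoly_eval m c a' \<notin> scalar_quats"
      by (auto simp: mpoly_image_def)
    then obtain a r x where "r < m" "mpoly_eval m c a \<in> scalar_quats" "mpoly_eval m c a \<noteq> 0"
        "mpoly_eval m c (a(r := x)) \<notin> scalar_quats"
      using mpoly_eval_scalar_if_stable[OF _ b] by blast
    then show ?thesis using mpoly_image_eq_UNIV by blast
  qed
qed

end
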